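(* Let $n\ge1$ and $\mathcal{K}=\{\texttt{a},\texttt{b}\}$. For the uniform prior $\pi$ on $\mathcal{K}^n$ and the single-target gain function $g_{\rm T}$, $$V_{\rm T}[\pi\triangleright\mathbf{S}]=\frac12+\frac{1}{2^n}\binom{n-1}{\lfloor\frac{n-1}{2}\rfloor}.$$
   Context: A dataset is $x=(x_0,\dots,x_{n-1})\in\mathcal{K}^n$; its histogram $h(x)$ is the map $\kappa\mapsto|\{i:x_i=\kappa\}|$; $\#z$ is the number of datasets with histogram $z$. Shuffle channel $\mathbf{S}:\mathcal{K}^n\to\mathcal{K}^n$: $\mathbf{S}_{x,y}=1/\#h(x)$ if $h(y)=h(x)$, else $0$. Uniform prior: $\pi_x=1/2^n$. Single-target gain function: $\mathcal{W}=\mathcal{K}$, $g_{\rm T}(w,x)=1$ if $x_0=w$, else $0$. Posterior vulnerability: $V_{\rm T}[\pi\triangleright\mathbf{C}]=\sum_{y}\max_{w\in\mathcal{W}}\sum_{x}\pi_x\mathbf{C}_{x,y}g_{\rm T}(w,x)$. *)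

theory Defs
  imports Complex_Main
begin

datatype K = Ka | Kb

definition datasets :: "nat \<Rightarrow> K list set" where
  "datasets n = {xs. length xs = n}"

definition hist :: "K list \<Rightarrow> K \<Rightarrow> nat" where
  "hist x = (\<lambda>k. card {i. i < length x \<and> x ! i = k})"

definition num_hist :: "nat \<Rightarrow> (K \<Rightarrow> nat) \<Rightarrow> nat" where
  "num_hist n z = card {y \<in> datasets n. hist y = z}"

definition shuffle :: "nat \<Rightarrow> K list \<Rightarrow> K list \<Rightarrow> real" where
  "shuffle n x y = (if hist y = hist x then 1 / real (num_hist n (hist x)) else 0)"

definition prior :: "nat \<Rightarrow> K list \<Rightarrow> real" where
  "prior n x = 1 / 2 ^ n"

definition g_T :: "K \<Rightarrow> K list \<Rightarrow> real" where
  "g_T w x = (if x ! 0 = w then 1 else 0)"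

definition V_T :: "nat \<Rightarrow> (K list \<Rightarrow> real) \<Rightarrow> (K list \<Rightarrow> K list \<Rightarrow> real) \<Rightarrow> real" where
  "V_T n \<pi> C = (\<Sum>y\<in>datasets n. Max ((\<lambda>w. \<Sum>x\<in>datasets n. \<pi> x * C x y * g_T w x) ` UNIV))"

end

theory Submission
  imports Defs
begin

text \<open>The shuffle reveals exactly the number k of a's. Given k, an adversary guessing the first
entry wins on the larger of the two classes of datasets starting with a (there are
C(n-1, k-1) of them) or with b (C(n-1, k)); the classes of size C(n, k) cancel against the
shuffle's normalisation, so 2^n V equals the sum over k of max(C(n-1, k-1), C(n-1, k)). Up to
the middle index the right term is the larger, past it the left one, so the sum covers every
binomial coefficient of row n-1 once and the central one twice.\<close>

lemma max_adjacent_binomial: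
  fixes m k :: nat
  assumes "k \<le> Suc m"
  shows "max (if k = 0 then 0 else m choose (k - 1)) (m choose k) =
         (if k \<le> Suc m div 2 then m choose k else m choose (k - 1))"
proof (cases "k \<le> Suc m div 2")
  case True
  have "m choose (k - 1) \<le> m choose k" if "k \<noteq> 0"
  proof (cases "2 * k \<le> m")
    case True
    then show ?thesis by (intro binomial_mono) auto
  next
    case False
    with \<open>k \<le> Suc m div 2\<close> that have "m - (k - 1) = k" by auto
    then show ?thesis using binomial_symmetric[of "k - 1" m] False by auto
  qed
  with True show ?thesis by auto
next
  case False
  have "m choose k \<le> m choose (k - 1)"
  proof (cases "k = Suc m")
    case False
    with \<open>\<not> k \<le> Suc m div 2\<close> assms show ?thesis by (intro binomial_antimono) auto
  qed (simp add: binomial_eq_0)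
  with False show ?thesis by auto
qed

lemma sum_max_adjacent_binomial:
  fixes m :: nat
  shows "(\<Sum>k\<le>Suc m. max (if k = 0 then 0 else m choose (k - 1)) (m choose k)) =
         2 ^ m + (m choose (m div 2))"
proof -
  define h where "h = Suc m div 2"
  have "h \<le> m" and "m - h = m div 2"
    unfolding h_def by simp presburger
  let ?f = "\<lambda>k. max (if k = 0 then 0 else m choose (k - 1)) (m choose k)"
  have "{..Suc m} = {..h} \<union> {Suc h..Suc m}" using \<open>h \<le> m\<close> by auto
  then have "(\<Sum>k\<le>Suc m. ?f k) = (\<Sum>k\<le>h. ?f k) + (\<Sum>k=Suc h..Suc m. ?f k)"
    by (simp add: sum.union_disjoint)
  also have "\<dots> = (\<Sum>k\<le>h. m choose k) + (\<Sum>k=Suc h..Suc m. m choose (k - 1))"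
  proof (intro arg_cong2[where f = "(+)"] sum.cong refl)
    show "?f k = m choose k" if "k \<in> {..h}" for k
      using that \<open>h \<le> m\<close> max_adjacent_binomial[of k m] by (simp add: h_def)
    show "?f k = m choose (k - 1)" if "k \<in> {Suc h..Suc m}" for k
      using that max_adjacent_binomial[of k m] by (simp add: h_def)
  qed
  also have "(\<Sum>k=Suc h..Suc m. m choose (k - 1)) = (\<Sum>k=h..<Suc m. m choose k)"
    by (subst sum.shift_bounds_cl_Suc_ivl) (simp add: atLeastLessThanSuc_atLeastAtMost)
  also have "(\<Sum>k\<le>h. m choose k) = (\<Sum>k=0..<h. m choose k) + (m choose h)"
    by (simp add: atLeast0LessThan flip: lessThan_Suc_atMost)
  also have "\<dots> + (\<Sum>k=h..<Suc m. m choose k) = (\<Sum>k=0..<Suc m. m choose k) + (m choose h)"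
    using \<open>h \<le> m\<close> by (simp add: sum.atLeastLessThan_concat)
  also have "(\<Sum>k=0..<Suc m. m choose k) = 2 ^ m"
    by (simp add: atLeast0LessThan lessThan_Suc_atMost choose_row_sum)
  also have "m choose h = m choose (m div 2)"
    using binomial_symmetric[OF \<open>h \<le> m\<close>] \<open>m - h = m div 2\<close> by simp
  finally show ?thesis .
qed

lemma UNIV_K: "(UNIV :: K set) = {Ka, Kb}"
  using K.exhaust by auto

lemma hist_eq_count_list: "hist x = count_list x"
  by (rule ext) (simp add: hist_def count_list_eq_length_filter length_filter_conv_card eq_commute)

lemma count_list_Ka_Kb: "count_list x Ka + count_list x Kb = length x"
proof -
  have "set x \<subseteq> {Ka, Kb}" using UNIV_K by blast
  then show ?thesis using sum_count_set[of x "{Ka, Kb}"] by simp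
qed

lemma hist_eq_iff_count_Ka:
  assumes "length x = length y"
  shows "hist x = hist y \<longleftrightarrow> count_list x Ka = count_list y Ka"
proof
  assume "count_list x Ka = count_list y Ka"
  then have "count_list x w = count_list y w" for w
    using count_list_Ka_Kb[of x] count_list_Ka_Kb[of y] assms by (cases w) auto
  then show "hist x = hist y" by (simp add: hist_eq_count_list fun_eq_iff)
qed (simp add: hist_eq_count_list)

lemma finite_datasets: "finite (datasets n)"
proof -
  have "datasets n = {xs. set xs \<subseteq> {Ka, Kb} \<and> length xs = n}"
    using UNIV_K by (auto simp: datasets_def)
  then show ?thesis using finite_lists_length_eq[of "{Ka, Kb}" n] by simp
qed

definition hist_class :: "nat \<Rightarrow> nat \<Rightarrow> K list set" where
  "hist_class n k = {x \<in> datasets n. count_list x Ka = k}"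

lemma hist_class_first_eq_image_Cons:
  "{x \<in> hist_class (Suc m) k. x ! 0 = w} =
   Cons w ` {x \<in> datasets m. count_list (w # x) Ka = k}"
  by (auto simp: hist_class_def datasets_def length_Suc_conv)

lemma card_hist_class_first:
  "card {x \<in> hist_class (Suc m) k. x ! 0 = Ka} =
   (if k = 0 then 0 else card (hist_class m (k - 1)))"
  "card {x \<in> hist_class (Suc m) k. x ! 0 = Kb} = card (hist_class m k)"
  unfolding hist_class_first_eq_image_Cons
  by (auto simp: card_image hist_class_def intro!: arg_cong[where f = card])

lemma card_hist_class: "card (hist_class n k) = n choose k"
proof (induction n arbitrary: k)
  case 0
  have "hist_class 0 k = (if k = 0 then {[]} else {})"
    by (auto simp: hist_class_def datasets_def)
  then show ?case by simp
next
  case (Suc m)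
  let ?first = "\<lambda>w. {x \<in> hist_class (Suc m) k. x ! 0 = w}"
  have "finite (hist_class (Suc m) k)"
    using finite_datasets by (simp add: hist_class_def)
  have "hist_class (Suc m) k = ?first Ka \<union> ?first Kb"
    by (auto intro: K.exhaust)
  then have "card (hist_class (Suc m) k) = card (?first Ka \<union> ?first Kb)"
    by (rule arg_cong)
  also have "\<dots> = card (?first Ka) + card (?first Kb)"
    using \<open>finite (hist_class (Suc m) k)\<close> by (intro card_Un_disjoint) auto
  finally have "card (hist_class (Suc m) k) = card (?first Ka) + card (?first Kb)" .
  then show ?case
    by (cases k) (simp_all add: card_hist_class_first Suc.IH)
qed

lemma num_hist_eq_binomial:
  assumes "y \<in> datasets n"
  shows "num_hist n (hist y) = n choose count_list y Ka"
proof -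
  have "{x \<in> datasets n. hist x = hist y} = hist_class n (count_list y Ka)"
    using assms hist_eq_iff_count_Ka by (auto simp: hist_class_def datasets_def)
  then show ?thesis by (simp add: num_hist_def card_hist_class)
qed

lemma posterior_gain_shuffle_prior:
  assumes y: "y \<in> datasets n"
  shows "(\<Sum>x\<in>datasets n. prior n x * shuffle n x y * g_T w x) =
         real (card {x \<in> hist_class n (count_list y Ka). x ! 0 = w}) /
         (2 ^ n * real (n choose count_list y Ka))"
proof -
  let ?c = "1 / (2 ^ n * real (n choose count_list y Ka))"
  let ?A = "{x \<in> hist_class n (count_list y Ka). x ! 0 = w}"
  have "(\<Sum>x\<in>datasets n. prior n x * shuffle n x y * g_T w x) =
        (\<Sum>x\<in>datasets n. if x \<in> ?A then ?c else 0)"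
  proof (rule sum.cong)
    fix x assume x: "x \<in> datasets n"
    then have "hist y = hist x \<longleftrightarrow> count_list x Ka = count_list y Ka"
      using y hist_eq_iff_count_Ka[of y x] by (auto simp: datasets_def)
    then show "prior n x * shuffle n x y * g_T w x =
          (if x \<in> ?A then ?c else 0)"
      using x num_hist_eq_binomial[OF x] by (auto simp: prior_def shuffle_def g_T_def hist_class_def)
  qed simp
  also have "\<dots> = real (card ?A) * ?c"
    using finite_datasets by (subst sum.If_cases) (auto simp: hist_class_def Int_absorb1)
  finally show ?thesis by simp
qed

lemma V_T_shuffle_prior:
  "V_T n (prior n) (shuffle n) =
   (\<Sum>k\<le>n. real (Max ((\<lambda>w. card {x \<in> hist_class n k. x ! 0 = w}) ` UNIV))) / 2 ^ n"
proof -
  define M where "M k = real (Max ((\<lambda>w. card {x \<in> hist_class n k. x ! 0 = w}) ` UNIV))" for k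
  define G where "G k = M k / (2 ^ n * real (n choose k))" for k
  have "Max ((\<lambda>w. \<Sum>x\<in>datasets n. prior n x * shuffle n x y * g_T w x) ` UNIV) =
        G (count_list y Ka)" if "y \<in> datasets n" for y
    using mono_Max_commute[of "\<lambda>t. real t / (2 ^ n * real (n choose count_list y Ka))"
        "(\<lambda>w. card {x \<in> hist_class n (count_list y Ka). x ! 0 = w}) ` UNIV"]
    by (simp add: posterior_gain_shuffle_prior[OF that] G_def M_def UNIV_K image_image
        mono_def divide_right_mono)
  then have "V_T n (prior n) (shuffle n) = (\<Sum>y\<in>datasets n. G (count_list y Ka))"
    by (simp add: V_T_def)
  also have "\<dots> = (\<Sum>k\<le>n. \<Sum>y\<in>hist_class n k. G (count_list y Ka))"
    unfolding hist_class_def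
    by (rule sum.group[symmetric])
      (auto simp: finite_datasets[unfolded datasets_def] datasets_def count_le_length)
  also have "\<dots> = (\<Sum>k\<le>n. M k / 2 ^ n)"
    by (intro sum.cong) (auto simp: hist_class_def card_hist_class[unfolded hist_class_def] G_def)
  finally show ?thesis by (simp add: sum_divide_distrib M_def)
qed

theorem mainTheorem10:
  fixes n :: nat
  assumes "n \<ge> 1"
  shows "V_T n (prior n) (shuffle n) =
           1 / 2 + 1 / 2 ^ n * real ((n - 1) choose ((n - 1) div 2))"
proof -
  obtain m where n: "n = Suc m" using assms by (cases n) auto
  have "Max ((\<lambda>w. card {x \<in> hist_class n k. x ! 0 = w}) ` UNIV) =
        max (if k = 0 then 0 else m choose (k - 1)) (m choose k)" for k
    by (simp add: n UNIV_K card_hist_class_first card_hist_class)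
  then have "V_T n (prior n) (shuffle n) =
             real (\<Sum>k\<le>Suc m. max (if k = 0 then 0 else m choose (k - 1)) (m choose k)) / 2 ^ n"
    by (simp add: V_T_shuffle_prior n)
  also have "\<dots> = (2 ^ m + real (m choose (m div 2))) / 2 ^ Suc m"
    unfolding sum_max_adjacent_binomial n by simp
  also have "\<dots> = 1 / 2 + 1 / 2 ^ n * real ((n - 1) choose ((n - 1) div 2))"
    by (simp add: n field_simps)
  finally show ?thesis .
qed

end
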